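(* Let $1\le p<2$, $f\in\mathcal H_0$, $u$ the solution of $\partial_tu+\partial J(u)\ni0$, $u(0)=f$, with extinction time $T_{\mathrm{ex}}$, $\lambda:=1/((2-p)T_{\mathrm{ex}})$, $a(t)=(1-(2-p)\lambda t)^{\frac1{2-p}}$ and $w(t):=u(t)/a(t)$ for $0\le t<T_{\mathrm{ex}}$. Then $t\mapsto\|w(t)\|$ is non-increasing.
   Context: $\mathcal H$ is a real Hilbert space with inner product $\langle\cdot,\cdot\rangle$ and norm $\|\cdot\|$. $J:\mathcal H\to\mathbb R\cup\{\infty\}$ is convex, lower semicontinuous, proper, with dense effective domain, and absolutely $p$-homogeneous: $J(cu)=|c|^pJ(u)$ for $c\ne0$, $J(0)=0$. Standing coercivity assumption: $\lambda_1:=\inf_{u\in\mathcal H_0}pJ(u)/\|u\|^p>0$. $\partial J(u)=\{\zeta: J(u)+\langle\zeta,v-u\rangle\le J(v)\ \forall v\}$; $\mathcal N(J)=\{u:J(u)=0\}$; $\mathcal H_0:=\mathcal N(J)^\perp\setminus\{0\}$. The gradient flow solution (Brezis) is the unique continuous $u:[0,\infty)\to\mathcal H$, Lipschitz on $[\delta,\infty)$ for all $\delta>0$, right-differentiable on $(0,\infty)$ with $u(0)=f$ and $\partial_t^+u(t)=-\zeta(t)$, $\zeta(t)$ the minimal-norm element of $\partial J(u(t))$. $T_{\mathrm{ex}}:=\inf\{T>0:u(t)=0\ \forall t\ge T\}$ (finite for $p<2$). *)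

theory Defs
  imports "HOL-Analysis.Analysis"
begin

text \<open>Functionals J : H -> R \<union> {\<infinity>} are modelled as ereal-valued maps that never take the value minus infinity.\<close>

definition proper_fun :: "('a \<Rightarrow> ereal) \<Rightarrow> bool" where
  "proper_fun J \<longleftrightarrow> (\<forall>u. J u \<noteq> -\<infinity>) \<and> (\<exists>u. J u \<noteq> \<infinity>)"

definition convex_fun :: "('a::real_vector \<Rightarrow> ereal) \<Rightarrow> bool" where
  "convex_fun J \<longleftrightarrow> (\<forall>x y t. 0 \<le> t \<and> t \<le> 1 \<longrightarrow>
      J ((1 - t) *\<^sub>R x + t *\<^sub>R y) \<le> ereal (1 - t) * J x + ereal t * J y)"

definition lsc_fun :: "('a::topological_space \<Rightarrow> ereal) \<Rightarrow> bool" where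
  "lsc_fun J \<longleftrightarrow> (\<forall>c. closed {u. J u \<le> c})"

definition dense_domain :: "('a::topological_space \<Rightarrow> ereal) \<Rightarrow> bool" where
  "dense_domain J \<longleftrightarrow> closure {u. J u < \<infinity>} = UNIV"

definition abs_homogeneous :: "real \<Rightarrow> ('a::real_vector \<Rightarrow> ereal) \<Rightarrow> bool" where
  "abs_homogeneous p J \<longleftrightarrow> J 0 = 0 \<and>
     (\<forall>c u. c \<noteq> 0 \<longrightarrow> J (c *\<^sub>R u) = ereal (\<bar>c\<bar> powr p) * J u)"

definition nullspace :: "('a \<Rightarrow> ereal) \<Rightarrow> 'a set" where
  "nullspace J = {u. J u = 0}"

definition H0 :: "('a::real_inner \<Rightarrow> ereal) \<Rightarrow> 'a set" where
  "H0 J = {u. (\<forall>v\<in>nullspace J. inner u v = 0)} - {0}"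

definition lambda1 :: "real \<Rightarrow> ('a::real_inner \<Rightarrow> ereal) \<Rightarrow> ereal" where
  "lambda1 p J = (INF u\<in>H0 J. ereal p * J u / ereal (norm u powr p))"

definition subdiff :: "('a::real_inner \<Rightarrow> ereal) \<Rightarrow> 'a \<Rightarrow> 'a set" where
  "subdiff J u = {z. \<forall>v. J u + ereal (inner z (v - u)) \<le> J v}"

definition min_norm_elem :: "'a::real_normed_vector set \<Rightarrow> 'a \<Rightarrow> bool" where
  "min_norm_elem S z \<longleftrightarrow> z \<in> S \<and> (\<forall>y\<in>S. norm z \<le> norm y)"

text \<open>Brezis gradient flow solution of  u' + \<partial>J(u) \<ni> 0, u(0) = f.\<close>
definition gradient_flow :: "('a::real_inner \<Rightarrow> ereal) \<Rightarrow> 'a \<Rightarrow> (real \<Rightarrow> 'a) \<Rightarrow> bool" where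
  "gradient_flow J f u \<longleftrightarrow>
     continuous_on {0..} u \<and> u 0 = f \<and>
     (\<forall>\<delta>>0. \<exists>L. L\<ge>0 \<and> L-lipschitz_on {\<delta>..} u) \<and>
     (\<forall>t>0. \<exists>z. min_norm_elem (subdiff J (u t)) z \<and>
              (u has_vector_derivative (- z)) (at t within {t..}))"

definition extinction_time :: "(real \<Rightarrow> 'a::zero) \<Rightarrow> real" where
  "extinction_time u = Inf {T. T > 0 \<and> (\<forall>t\<ge>T. u t = 0)}"

end

theory Submission
  imports Defs
begin

text \<open>
  Write \<open>G = \<parallel>u\<parallel>\<^sup>2\<^sup>-\<^sup>p\<close>, let \<open>R = J (u / \<parallel>u\<parallel>)\<close> be the Rayleigh quotient along the flow and
  \<open>T\<close> the extinction time. Euler's identity \<open>\<langle>\<zeta>, u\<rangle> = p J(u)\<close> for subgradients gives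
  \<open>G' = -(2 - p) p R\<close>, and \<open>R\<close> is non-increasing: for the normalised flow \<open>y = u / \<parallel>u\<parallel>\<close>
  the Cauchy-Schwarz inequality gives \<open>\<langle>\<zeta>, y'\<rangle> \<le> 0\<close>. Hence
  \<open>G \<tau> = \<integral>\<^sub>\<tau>\<^sup>T (2 - p) p R \<le> (2 - p) p R \<tau> (T - \<tau>)\<close>, which says exactly that \<open>G t / (T - t)\<close>
  is non-increasing; and \<open>\<parallel>w t\<parallel>\<^sup>2\<^sup>-\<^sup>p = T G t / (T - t)\<close>.
  The flow only has right derivatives, so monotonicity is always derived by a Dini-type
  continuous induction; for \<open>R\<close> this needs right continuity of the minimal section \<open>\<zeta>\<close>,
  which follows from the parallelogram law applied to \<open>\<epsilon>\<close>-subdifferentials.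
\<close>

section \<open>Monotonicity from one-sided derivatives\<close>

lemma le_add_slope_by_continuous_induction:
  fixes \<phi> :: "real \<Rightarrow> real"
  assumes ab: "a \<le> b" and \<epsilon>: "\<epsilon> > 0"
    and left: "\<And>t e. t \<in> {a<..b} \<Longrightarrow> e > 0 \<Longrightarrow> eventually (\<lambda>s. \<phi> t < \<phi> s + e) (at_left t)"
    and right: "\<And>t. t \<in> {a..<b} \<Longrightarrow> eventually (\<lambda>s. \<phi> s \<le> \<phi> t + \<epsilon> * (s - t)) (at_right t)"
  shows "\<phi> b \<le> \<phi> a + \<epsilon> * (b - a)"
proof -
  define S where "S = {t\<in>{a..b}. \<phi> t \<le> \<phi> a + \<epsilon> * (t - a)}"
  define c where "c = Sup S"
  have aS: "a \<in> S" using ab by (simp add: S_def)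
  have bdd: "bdd_above S" unfolding S_def by (rule bdd_aboveI[of _ b]) auto
  have ac: "a \<le> c" unfolding c_def using aS bdd by (rule cSup_upper)
  have cb: "c \<le> b" unfolding c_def using aS by (intro cSup_least) (auto simp: S_def)
  have cS: "c \<in> S"
  proof (rule ccontr)
    assume ncS: "c \<notin> S"
    with aS ac have ac': "a < c" by (cases "c = a") auto
    define d where "d = \<phi> c - \<phi> a - \<epsilon> * (c - a)"
    have d: "d > 0" using ncS ac' cb by (auto simp: S_def d_def)
    have "eventually (\<lambda>s. \<phi> c < \<phi> s + d) (at_left c)" using left[of c d] ac' cb d by auto
    then obtain l where l: "l < c" and lP: "\<And>y. l < y \<Longrightarrow> y < c \<Longrightarrow> \<phi> c < \<phi> y + d"
      unfolding eventually_at_left_field by auto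
    have "max l a < Sup S" using l ac' by (simp add: c_def[symmetric])
    then obtain s where sS: "s \<in> S" and ls: "max l a < s"
      using aS by (subst (asm) less_cSup_iff[OF _ bdd]) auto
    have "s \<le> c" unfolding c_def using sS bdd by (rule cSup_upper)
    with sS ncS have sc: "s < c" by (cases "s = c") auto
    have "\<phi> s \<le> \<phi> a + \<epsilon> * (s - a)" using sS by (simp add: S_def)
    also have "\<dots> \<le> \<phi> a + \<epsilon> * (c - a)" using sc \<epsilon> by (intro add_left_mono mult_left_mono) auto
    finally have "\<phi> s + d \<le> \<phi> c" by (simp add: d_def)
    with lP[of s] ls sc show False by auto
  qed
  have "c = b"
  proof (rule ccontr)
    assume "c \<noteq> b"
    with cb have cb': "c < b" by auto
    obtain r where r: "r > c" and rP: "\<And>y. c < y \<Longrightarrow> y < r \<Longrightarrow> \<phi> y \<le> \<phi> c + \<epsilon> * (y - c)"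
      using right[of c] ac cb' unfolding eventually_at_right_field by auto
    define s where "s = (c + min r b) / 2"
    have s: "c < s" "s < r" "s \<le> b" using r cb' by (auto simp: s_def)
    have "\<phi> s \<le> \<phi> c + \<epsilon> * (s - c)" using rP s by auto
    also have "\<dots> \<le> \<phi> a + \<epsilon> * (c - a) + \<epsilon> * (s - c)" using cS by (simp add: S_def)
    finally have "s \<in> S" using s ac by (simp add: S_def algebra_simps)
    hence "s \<le> c" unfolding c_def using bdd by (rule cSup_upper)
    thus False using s by auto
  qed
  thus ?thesis using cS by (simp add: S_def)
qed

lemma le_if_left_lsc_right_Dini_nonpos:
  fixes \<phi> :: "real \<Rightarrow> real"
  assumes ab: "a \<le> b"
    and left: "\<And>t e. t \<in> {a<..b} \<Longrightarrow> e > 0 \<Longrightarrow> eventually (\<lambda>s. \<phi> t < \<phi> s + e) (at_left t)"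
    and right: "\<And>t e. t \<in> {a..<b} \<Longrightarrow> e > 0 \<Longrightarrow>
                  eventually (\<lambda>s. \<phi> s \<le> \<phi> t + e * (s - t)) (at_right t)"
  shows "\<phi> b \<le> \<phi> a"
proof (rule field_le_epsilon)
  fix e :: real assume e: "e > 0"
  define \<epsilon> where "\<epsilon> = e / (b - a + 1)"
  have \<epsilon>: "\<epsilon> > 0" using ab e by (simp add: \<epsilon>_def)
  have "\<phi> b \<le> \<phi> a + \<epsilon> * (b - a)"
    by (rule le_add_slope_by_continuous_induction[OF ab \<epsilon> left right[OF _ \<epsilon>]])
  also have "\<epsilon> * (b - a) \<le> e" using ab e by (simp add: \<epsilon>_def field_simps)
  finally show "\<phi> b \<le> \<phi> a + e" by simp
qed

lemma eventually_le_add_slope_if_right_deriv_nonpos: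
  fixes \<phi> :: "real \<Rightarrow> real"
  assumes d: "(\<phi> has_real_derivative D) (at t within {t..})" and D: "D \<le> 0" and e: "e > 0"
  shows "eventually (\<lambda>s. \<phi> s \<le> \<phi> t + e * (s - t)) (at_right t)"
proof -
  have "((\<lambda>y. (\<phi> y - \<phi> t) / (y - t)) \<longlongrightarrow> D) (at_right t)"
    using d unfolding has_field_derivative_iff at_within_Ici_at_right .
  hence "eventually (\<lambda>y. (\<phi> y - \<phi> t) / (y - t) < D + e) (at_right t)"
    using e by (intro order_tendstoD(2)) auto
  with eventually_at_right_less[of t] show ?thesis
  proof eventually_elim
    case (elim s)
    hence "\<phi> s - \<phi> t < (D + e) * (s - t)" by (simp add: pos_divide_less_eq)
    moreover have "(D + e) * (s - t) \<le> e * (s - t)" using D elim by (intro mult_right_mono) auto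
    ultimately show ?case by simp
  qed
qed

lemma le_if_continuous_right_deriv_nonpos:
  fixes \<phi> :: "real \<Rightarrow> real"
  assumes ab: "a \<le> b" and c: "continuous_on {a..b} \<phi>"
    and d: "\<And>t. t \<in> {a..<b} \<Longrightarrow> \<exists>D. (\<phi> has_real_derivative D) (at t within {t..}) \<and> D \<le> 0"
  shows "\<phi> b \<le> \<phi> a"
proof (rule le_if_left_lsc_right_Dini_nonpos[OF ab])
  fix t e :: real assume t: "t \<in> {a<..b}" and e: "e > 0"
  have "continuous_on {a..t} \<phi>" by (rule continuous_on_subset[OF c]) (use t in auto)
  hence "(\<phi> \<longlongrightarrow> \<phi> t) (at_left t)" using t by (intro continuous_on_Icc_at_leftD) auto
  hence "eventually (\<lambda>s. \<phi> t - e < \<phi> s) (at_left t)" using e by (intro order_tendstoD(1)) auto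
  thus "eventually (\<lambda>s. \<phi> t < \<phi> s + e) (at_left t)" by eventually_elim simp
next
  fix t e :: real assume t: "t \<in> {a..<b}" and e: "e > 0"
  obtain D where "(\<phi> has_real_derivative D) (at t within {t..})" "D \<le> 0" using d[OF t] by blast
  thus "eventually (\<lambda>s. \<phi> s \<le> \<phi> t + e * (s - t)) (at_right t)"
    using eventually_le_add_slope_if_right_deriv_nonpos e by blast
qed

lemma le_if_continuous_right_deriv_nonpos_interior:
  fixes \<phi> :: "real \<Rightarrow> real"
  assumes ab: "a \<le> b" and c: "continuous_on {a..b} \<phi>"
    and d: "\<And>t. t \<in> {a<..<b} \<Longrightarrow> \<exists>D. (\<phi> has_real_derivative D) (at t within {t..}) \<and> D \<le> 0"
  shows "\<phi> b \<le> \<phi> a"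
proof (cases "a = b")
  case False
  with ab have ab': "a < b" by simp
  have le: "\<phi> b \<le> \<phi> a'" if "a' \<in> {a<..<b}" for a'
  proof (rule le_if_continuous_right_deriv_nonpos[where \<phi>=\<phi>])
    show "continuous_on {a'..b} \<phi>" by (rule continuous_on_subset[OF c]) (use that in auto)
  qed (use that d in auto)
  have "(\<phi> \<longlongrightarrow> \<phi> a) (at_right a)" using c ab' by (intro continuous_on_Icc_at_rightD)
  moreover have "eventually (\<lambda>a'. a' \<in> {a<..<b}) (at_right a)"
    using eventually_at_right_field[of "\<lambda>a'. a' \<in> {a<..<b}" a] ab' by auto
  hence "eventually (\<lambda>a'. \<phi> b \<le> \<phi> a') (at_right a)" by eventually_elim (rule le)
  ultimately show ?thesis by (intro tendsto_le[OF _ _ tendsto_const]) auto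
qed simp

section \<open>Calculus and geometry in inner product spaces\<close>

lemma norm_diff_sq_midpoint:
  fixes a b :: "'a::real_inner"
  shows "norm (a - b) ^ 2 = 2 * norm a ^ 2 + 2 * norm b ^ 2 - 4 * norm ((1/2) *\<^sub>R (a + b)) ^ 2"
  by (simp add: power2_norm_eq_inner inner_diff_left inner_diff_right inner_add_left inner_add_right
      inner_commute algebra_simps)

lemma has_real_derivative_norm_sq:
  fixes w :: "real \<Rightarrow> 'a::real_inner"
  assumes "(w has_vector_derivative w') (at t within S)"
  shows "((\<lambda>s. norm (w s) ^ 2) has_real_derivative (2 * inner (w t) w')) (at t within S)"
proof -
  have d: "(w has_derivative (\<lambda>h. h *\<^sub>R w')) (at t within S)"
    using assms by (simp add: has_vector_derivative_def)
  have "((\<lambda>s. inner (w s) (w s)) has_derivative (\<lambda>h. inner (w t) (h *\<^sub>R w') + inner (h *\<^sub>R w') (w t)))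
          (at t within S)"
    by (rule has_derivative_inner[OF d d])
  moreover have "(\<lambda>h. inner (w t) (h *\<^sub>R w') + inner (h *\<^sub>R w') (w t)) = (*) (2 * inner (w t) w')"
    by (rule ext) (simp add: inner_commute algebra_simps)
  ultimately show ?thesis by (simp add: has_field_derivative_def power2_norm_eq_inner)
qed

lemma has_real_derivative_inner_const:
  fixes w :: "real \<Rightarrow> 'a::real_inner"
  assumes "(w has_vector_derivative w') (at t within S)"
  shows "((\<lambda>s. inner (w s) n) has_real_derivative (inner w' n)) (at t within S)"
proof -
  have d: "(w has_derivative (\<lambda>h. h *\<^sub>R w')) (at t within S)"
    using assms by (simp add: has_vector_derivative_def)
  have "((\<lambda>s. inner (w s) n) has_derivative (\<lambda>h. inner (w t) 0 + inner (h *\<^sub>R w') n)) (at t within S)"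
    by (rule has_derivative_inner[OF d has_derivative_const])
  moreover have "(\<lambda>h. inner (w t) 0 + inner (h *\<^sub>R w') n) = (*) (inner w' n)"
    by (rule ext) (simp add: algebra_simps)
  ultimately show ?thesis by (simp add: has_field_derivative_def)
qed

lemma right_difference_quotient_tendsto:
  fixes f :: "real \<Rightarrow> 'a::real_normed_vector"
  assumes "(f has_vector_derivative f') (at t within {t..})"
  shows "((\<lambda>h. (1/h) *\<^sub>R (f (t + h) - f t)) \<longlongrightarrow> f') (at_right 0)"
proof -
  have "((\<lambda>y. norm ((f y - f t) - (y - t) *\<^sub>R f') / norm (y - t)) \<longlongrightarrow> 0) (at_right t)"
    using assms
    unfolding has_vector_derivative_def has_derivative_iff_norm at_within_Ici_at_right by simp
  hence L: "((\<lambda>h. norm ((f (h + t) - f t) - h *\<^sub>R f') / norm h) \<longlongrightarrow> 0) (at_right 0)"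
    unfolding filterlim_at_right_to_0[of _ _ t] by simp
  have "eventually (\<lambda>h. norm ((f (h + t) - f t) - h *\<^sub>R f') / norm h
                      = norm ((1/h) *\<^sub>R (f (t + h) - f t) - f')) (at_right 0)"
    using eventually_at_right_less[of "0::real"]
  proof eventually_elim
    case (elim h)
    have "(1/h) *\<^sub>R (f (t + h) - f t) - f' = (1/h) *\<^sub>R ((f (h + t) - f t) - h *\<^sub>R f')"
      using elim by (simp add: algebra_simps)
    thus ?case using elim by (simp add: divide_simps)
  qed
  from Lim_transform_eventually[OF L this]
  have "((\<lambda>h. (1/h) *\<^sub>R (f (t + h) - f t) - f') \<longlongrightarrow> 0) (at_right 0)"
    by (rule tendsto_norm_zero_cancel)
  thus ?thesis by (rule LIM_zero_cancel)
qed

lemma Cauchy_if_almost_min_norm_in_nested_convex: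
  fixes m :: "nat \<Rightarrow> 'a::real_inner"
  assumes nested: "decseq C" and convex: "\<And>n. convex (C n)" and m: "\<And>n. m n \<in> C n"
    and lower: "\<And>n x. x \<in> C n \<Longrightarrow> \<mu> n \<le> norm x ^ 2"
    and \<mu>: "\<mu> \<longlonglongrightarrow> M" "\<And>n. \<mu> n \<le> M"
    and almost_min: "\<And>n. norm (m n) ^ 2 \<le> \<mu> n + inverse (Suc n)"
  shows "Cauchy m"
proof (rule CauchyI)
  have bound: "norm (m n - m k) ^ 2 \<le> 2 * (M - \<mu> n) + 4 * inverse (Suc n)" if "n \<le> k" for n k
  proof -
    have "m k \<in> C n" using m[of k] nested that by (auto simp: decseq_def)
    hence "(1/2) *\<^sub>R (m n + m k) \<in> C n"
      using convexD[OF convex m[of n] \<open>m k \<in> C n\<close>, of "1/2" "1/2"] by (simp add: scaleR_add_right)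
    hence "\<mu> n \<le> norm ((1/2) *\<^sub>R (m n + m k)) ^ 2" by (rule lower)
    moreover have "norm (m k) ^ 2 \<le> M + inverse (Suc n)"
      using almost_min[of k] \<mu>(2)[of k] that by (smt (verit) le_imp_inverse_le of_nat_0_less_iff of_nat_mono
            Suc_le_mono zero_less_Suc)
    ultimately show ?thesis using norm_diff_sq_midpoint[of "m n" "m k"] almost_min[of n] by (smt (verit))
  qed
  fix r :: real assume r: "r > 0"
  have "(\<lambda>n. 2 * (M - \<mu> n) + 4 * inverse (real (Suc n))) \<longlonglongrightarrow> 2 * (M - M) + 4 * 0"
    by (intro tendsto_intros \<mu>(1) LIMSEQ_inverse_real_of_nat)
  hence "eventually (\<lambda>n. 2 * (M - \<mu> n) + 4 * inverse (real (Suc n)) < r ^ 2) sequentially"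
    using r by (intro order_tendstoD(2)) auto
  then obtain N where N: "\<And>n. n \<ge> N \<Longrightarrow> 2 * (M - \<mu> n) + 4 * inverse (real (Suc n)) < r ^ 2"
    by (auto simp: eventually_sequentially)
  have "norm (m n - m k) ^ 2 < r ^ 2" if "n \<ge> N" "k \<ge> N" for n k
  proof (cases "n \<le> k")
    case True thus ?thesis using bound[OF True] N[of n] that by linarith
  next
    case False
    hence "norm (m k - m n) ^ 2 \<le> 2 * (M - \<mu> k) + 4 * inverse (Suc k)" by (intro bound) auto
    thus ?thesis using N[of k] that by (simp add: norm_minus_commute)
  qed
  thus "\<exists>N. \<forall>n\<ge>N. \<forall>k\<ge>N. norm (m n - m k) < r"
    using r by (meson less_le power_less_imp_less_base)
qed

lemma nested_closed_convex_common_point_norm_le: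
  fixes C :: "nat \<Rightarrow> 'a::{real_inner,complete_space} set"
  assumes nested: "decseq C" and convex: "\<And>n. convex (C n)" and closed: "\<And>n. closed (C n)"
    and small: "\<And>n. \<exists>x\<in>C n. norm x ^ 2 < L"
  shows "\<exists>z. (\<forall>n. z \<in> C n) \<and> norm z ^ 2 \<le> L"
proof -
  define \<mu> where "\<mu> n = Inf ((\<lambda>x. norm x ^ 2) ` C n)" for n
  have ne: "(\<lambda>x. norm x ^ 2) ` C n \<noteq> {}" for n using small[of n] by auto
  have bdd: "bdd_below ((\<lambda>x. norm x ^ 2) ` C n)" for n by (rule bdd_belowI[of _ 0]) auto
  have lower: "\<mu> n \<le> norm x ^ 2" if "x \<in> C n" for n x
    unfolding \<mu>_def using bdd that by (intro cInf_lower) auto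
  have \<mu>_less: "\<mu> n < L" for n using small[of n] lower by (meson le_less_trans)
  have inc: "incseq \<mu>"
  proof (rule incseq_SucI)
    fix n
    have "C (Suc n) \<subseteq> C n" using nested by (simp add: decseq_Suc_iff)
    thus "\<mu> n \<le> \<mu> (Suc n)" unfolding \<mu>_def by (intro cInf_superset_mono ne bdd image_mono)
  qed
  have bounded: "\<forall>n. \<mu> n \<le> L" using \<mu>_less by (simp add: less_imp_le)
  obtain M where M: "\<mu> \<longlonglongrightarrow> M" "\<And>n. \<mu> n \<le> M"
    using incseq_convergent[OF inc bounded] by blast
  have "M \<le> L" using LIMSEQ_le_const2[OF M(1)] bounded by blast
  have "\<exists>x\<in>C n. norm x ^ 2 < \<mu> n + inverse (Suc n)" for n
    using cInf_lessD[OF ne[of n], of "\<mu> n + inverse (Suc n)"] by (auto simp: \<mu>_def)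
  then obtain m where m: "\<And>n. m n \<in> C n" "\<And>n. norm (m n) ^ 2 < \<mu> n + inverse (Suc n)"
    by metis
  have "Cauchy m"
    using Cauchy_if_almost_min_norm_in_nested_convex[OF nested convex m(1) lower M] m(2)
    by (simp add: less_imp_le)
  then obtain z where z: "m \<longlonglongrightarrow> z" using Cauchy_convergent_iff convergent_def by blast
  have "z \<in> C n" for n
  proof (rule Lim_in_closed_set[OF closed _ _ z])
    show "eventually (\<lambda>k. m k \<in> C n) sequentially"
      using m(1) nested unfolding eventually_sequentially decseq_def by blast
  qed simp
  moreover have "norm z ^ 2 \<le> M"
  proof (rule LIMSEQ_le)
    show "(\<lambda>k. norm (m k) ^ 2) \<longlonglongrightarrow> norm z ^ 2" by (intro tendsto_intros z)
    show "(\<lambda>k. M + inverse (real (Suc k))) \<longlonglongrightarrow> M"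
      using tendsto_add[OF tendsto_const LIMSEQ_inverse_real_of_nat, of M] by simp
    have "norm (m k) ^ 2 \<le> M + inverse (real (Suc k))" for k
      using m(2)[of k] M(2)[of k] by linarith
    thus "\<exists>N. \<forall>k\<ge>N. norm (m k) ^ 2 \<le> M + inverse (real (Suc k))" by blast
  qed
  ultimately show ?thesis using \<open>M \<le> L\<close> order_trans by blast
qed

section \<open>Absolutely homogeneous convex functionals\<close>

locale homogeneous_convex_functional =
  fixes J :: "'a::{real_inner,complete_space} \<Rightarrow> ereal" and p :: real
  assumes convex_J: "convex_fun J" and proper_J: "proper_fun J"
    and homogeneous_J: "abs_homogeneous p J" and p_ge_1: "1 \<le> p"
begin

definition Jr :: "'a \<Rightarrow> real" where "Jr x = real_of_ereal (J x)"

lemma J_not_MInf: "J x \<noteq> -\<infinity>"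
  using proper_J by (auto simp: proper_fun_def)

lemma J_eq_Jr: "J v \<noteq> \<infinity> \<Longrightarrow> J v = ereal (Jr v)"
  using J_not_MInf[of v] by (cases "J v") (auto simp: Jr_def)

lemma J_scaleR: "c \<noteq> 0 \<Longrightarrow> J (c *\<^sub>R x) = ereal (\<bar>c\<bar> powr p) * J x"
  using homogeneous_J unfolding abs_homogeneous_def by blast

lemma J_zero: "J 0 = 0"
  using homogeneous_J unfolding abs_homogeneous_def by (rule conjunct1)

lemma J_nonneg: "0 \<le> J x"
proof -
  have "J ((1 - 1/2) *\<^sub>R x + (1/2) *\<^sub>R (-x)) \<le> ereal (1 - 1/2) * J x + ereal (1/2) * J (-x)"
    by (rule convex_fun_def[THEN iffD1, OF convex_J, rule_format]) auto
  moreover have "J (-x) = J x" using J_scaleR[of "-1" x] by simp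
  moreover have "(1 - 1/2) *\<^sub>R x + (1/2) *\<^sub>R (-x) = 0" by simp
  ultimately have "0 \<le> ereal (1/2) * J x + ereal (1/2) * J x" using J_zero by simp
  thus ?thesis using J_not_MInf[of x] by (cases "J x") auto
qed

lemma Jr_nonneg: "0 \<le> Jr x"
  using J_nonneg[of x] by (cases "J x") (auto simp: Jr_def)

lemma J_scaleR_finite: "J x \<noteq> \<infinity> \<Longrightarrow> J (c *\<^sub>R x) \<noteq> \<infinity>"
  using J_scaleR[of c x] J_eq_Jr[of x] J_zero by (cases "c = 0") auto

lemma Jr_scaleR: "c \<noteq> 0 \<Longrightarrow> Jr (c *\<^sub>R x) = \<bar>c\<bar> powr p * Jr x"
  using J_scaleR[of c x] J_not_MInf[of x] by (cases "J x") (auto simp: Jr_def)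

lemma subdiff_finite: "\<xi> \<in> subdiff J x \<Longrightarrow> J x \<noteq> \<infinity>"
proof -
  assume "\<xi> \<in> subdiff J x"
  obtain v where v: "J v \<noteq> \<infinity>" using proper_J by (auto simp: proper_fun_def)
  have "J x + ereal (inner \<xi> (v - x)) \<le> J v" using \<open>\<xi> \<in> _\<close> by (auto simp: subdiff_def)
  thus ?thesis using v by auto
qed

lemma subgradient_ineq: "\<xi> \<in> subdiff J x \<Longrightarrow> J v \<noteq> \<infinity> \<Longrightarrow> Jr x + inner \<xi> (v - x) \<le> Jr v"
proof -
  assume a: "\<xi> \<in> subdiff J x" "J v \<noteq> \<infinity>"
  have "J x + ereal (inner \<xi> (v - x)) \<le> J v" using a by (auto simp: subdiff_def)
  thus ?thesis using J_eq_Jr[OF subdiff_finite[OF a(1)]] J_eq_Jr[OF a(2)] by simp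
qed

lemma subdiffI:
  assumes "J x \<noteq> \<infinity>" and "\<And>v. J v \<noteq> \<infinity> \<Longrightarrow> Jr x + inner \<xi> (v - x) \<le> Jr v"
  shows "\<xi> \<in> subdiff J x"
  unfolding subdiff_def
proof safe
  fix v
  show "J x + ereal (inner \<xi> (v - x)) \<le> J v"
    using assms J_eq_Jr[of v] J_eq_Jr[OF assms(1)] by (cases "J v = \<infinity>") auto
qed

lemma subdiff_monotone:
  assumes "\<xi>1 \<in> subdiff J x1" and "\<xi>2 \<in> subdiff J x2"
  shows "0 \<le> inner (\<xi>1 - \<xi>2) (x1 - x2)"
  using subgradient_ineq[OF assms(1) subdiff_finite[OF assms(2)]]
    subgradient_ineq[OF assms(2) subdiff_finite[OF assms(1)]]
  by (simp add: inner_diff_left inner_diff_right algebra_simps)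

text \<open>Euler's identity: the subgradient gives an affine minorant of \<open>c \<mapsto> J (c x) = c\<^sup>p J x\<close>
  touching it at \<open>c = 1\<close>, so their derivatives agree there.\<close>

lemma inner_subdiff_self:
  assumes "\<xi> \<in> subdiff J x"
  shows "inner \<xi> x = p * Jr x"
proof -
  have fin: "J x \<noteq> \<infinity>" using subdiff_finite[OF assms] .
  define k where "k = (\<lambda>c::real. c powr p * Jr x - Jr x - (c - 1) * inner \<xi> x)"
  have "k 1 \<le> k c" if "\<bar>1 - c\<bar> < 1" for c
  proof -
    have c: "c > 0" using that by auto
    have "Jr x + inner \<xi> (c *\<^sub>R x - x) \<le> Jr (c *\<^sub>R x)"
      by (rule subgradient_ineq[OF assms J_scaleR_finite[OF fin]])
    also have "\<dots> = c powr p * Jr x" using Jr_scaleR[of c x] c by simp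
    finally show ?thesis using c by (simp add: k_def inner_diff_right algebra_simps)
  qed
  moreover have "(k has_real_derivative (p * 1 powr (p - 1) * Jr x - 0 - (1 * inner \<xi> x))) (at 1)"
    unfolding k_def by (auto intro!: derivative_eq_intros)
  ultimately have "p * 1 powr (p - 1) * Jr x - 0 - (1 * inner \<xi> x) = 0"
    by (metis DERIV_local_min zero_less_one)
  thus ?thesis by simp
qed

lemma subdiff_scaleR:
  assumes \<xi>: "\<xi> \<in> subdiff J x" and c: "c > 0"
  shows "(c powr (p - 1)) *\<^sub>R \<xi> \<in> subdiff J (c *\<^sub>R x)"
proof (rule subdiffI)
  show "J (c *\<^sub>R x) \<noteq> \<infinity>" using J_scaleR_finite[OF subdiff_finite[OF \<xi>]] .
  fix v assume v: "J v \<noteq> \<infinity>"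
  have "Jr x + inner \<xi> ((1/c) *\<^sub>R v - x) \<le> Jr ((1/c) *\<^sub>R v)"
    by (rule subgradient_ineq[OF \<xi> J_scaleR_finite[OF v]])
  hence "c powr p * (Jr x + inner \<xi> ((1/c) *\<^sub>R v - x)) \<le> c powr p * Jr ((1/c) *\<^sub>R v)"
    by (rule mult_left_mono) simp
  also have "c powr p * Jr ((1/c) *\<^sub>R v) = Jr v"
    using Jr_scaleR[of "1/c" v] c by (simp add: powr_divide)
  also have "c powr p * (Jr x + inner \<xi> ((1/c) *\<^sub>R v - x))
           = Jr (c *\<^sub>R x) + inner ((c powr (p - 1)) *\<^sub>R \<xi>) (v - c *\<^sub>R x)"
  proof -
    have "inner \<xi> ((1/c) *\<^sub>R v - x) = (1/c) * inner \<xi> (v - c *\<^sub>R x)"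
      using c by (simp add: inner_diff_right field_simps)
    moreover have powr_p_1: "c powr (p - 1) = c powr p / c" using c by (simp add: powr_diff)
    ultimately show ?thesis
      using Jr_scaleR[of c x] c unfolding powr_p_1 by (simp add: field_simps inner_diff_right)
  qed
  finally show "Jr (c *\<^sub>R x) + inner ((c powr (p - 1)) *\<^sub>R \<xi>) (v - c *\<^sub>R x) \<le> Jr v" .
qed

lemma subdiff_orthogonal_nullspace:
  assumes \<xi>: "\<xi> \<in> subdiff J x" and n: "n \<in> nullspace J"
  shows "inner \<xi> n = 0"
proof (rule ccontr)
  assume ne: "inner \<xi> n \<noteq> 0"
  have "J (c *\<^sub>R n) = 0" for c
    using J_scaleR[of c n] J_zero n by (cases "c = 0") (auto simp: nullspace_def)
  hence bound: "Jr x + inner \<xi> (c *\<^sub>R n - x) \<le> 0" for c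
    using subgradient_ineq[OF \<xi>, of "c *\<^sub>R n"] by (simp add: Jr_def)
  define K where "K = \<bar>Jr x - inner \<xi> x\<bar> + 1"
  have "inner \<xi> ((K / inner \<xi> n) *\<^sub>R n - x) = K - inner \<xi> x"
    using ne by (simp add: inner_diff_right)
  with bound[of "K / inner \<xi> n"] have "Jr x + K - inner \<xi> x \<le> 0" by simp
  thus False unfolding K_def by linarith
qed

text \<open>\<open>Jr x\<close> is junk unless \<open>J x < \<infinity>\<close>; the \<open>\<epsilon>\<close>-subdifferential is only used at such \<open>x\<close>.\<close>

definition eps_subdiff :: "'a \<Rightarrow> real \<Rightarrow> 'a set" where
  "eps_subdiff x e = {\<xi>. \<forall>v. J v \<noteq> \<infinity> \<longrightarrow> Jr x + inner \<xi> (v - x) \<le> Jr v + e}"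

lemma eps_subdiff_mono: "e \<le> e' \<Longrightarrow> eps_subdiff x e \<subseteq> eps_subdiff x e'"
  unfolding eps_subdiff_def by force

lemma convex_eps_subdiff: "convex (eps_subdiff x e)"
proof (rule convexI)
  fix \<xi>1 \<xi>2 and s t :: real
  assume \<xi>: "\<xi>1 \<in> eps_subdiff x e" "\<xi>2 \<in> eps_subdiff x e" and st: "0 \<le> s" "0 \<le> t" "s + t = 1"
  hence t: "t = 1 - s" by simp
  show "s *\<^sub>R \<xi>1 + t *\<^sub>R \<xi>2 \<in> eps_subdiff x e"
    unfolding eps_subdiff_def
  proof safe
    fix v assume v: "J v \<noteq> \<infinity>"
    have "Jr x + inner \<xi>1 (v - x) \<le> Jr v + e" "Jr x + inner \<xi>2 (v - x) \<le> Jr v + e"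
      using \<xi> v by (auto simp: eps_subdiff_def)
    hence "s * (Jr x + inner \<xi>1 (v - x)) + t * (Jr x + inner \<xi>2 (v - x)) \<le> s * (Jr v + e) + t * (Jr v + e)"
      using st by (intro add_mono[OF mult_left_mono mult_left_mono]) auto
    thus "Jr x + inner (s *\<^sub>R \<xi>1 + t *\<^sub>R \<xi>2) (v - x) \<le> Jr v + e"
      unfolding t by (simp add: inner_add_left algebra_simps)
  qed
qed

lemma closed_eps_subdiff: "closed (eps_subdiff x e)"
proof -
  have "eps_subdiff x e = (\<Inter>v\<in>{v. J v \<noteq> \<infinity>}. {\<xi>. Jr x + inner \<xi> (v - x) \<le> Jr v + e})"
    by (auto simp: eps_subdiff_def)
  thus ?thesis by (auto intro!: closed_INT closed_Collect_le continuous_intros)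
qed

lemma subdiff_subset_eps_subdiff: "0 \<le> e \<Longrightarrow> subdiff J x \<subseteq> eps_subdiff x e"
  unfolding eps_subdiff_def using subgradient_ineq by force

lemma subdiff_if_eps_subdiff:
  assumes fin: "J x \<noteq> \<infinity>" and eps: "\<And>e. e > 0 \<Longrightarrow> \<xi> \<in> eps_subdiff x e"
  shows "\<xi> \<in> subdiff J x"
proof (rule subdiffI[OF fin])
  fix v assume "J v \<noteq> \<infinity>"
  with eps have "Jr x + inner \<xi> (v - x) \<le> Jr v + e" if "e > 0" for e
    using that by (auto simp: eps_subdiff_def)
  thus "Jr x + inner \<xi> (v - x) \<le> Jr v" by (rule field_le_epsilon)
qed

lemma eps_subdiff_norm_lower_bound:
  assumes a: "min_norm_elem (subdiff J x) a" and \<eta>: "\<eta> > 0"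
  shows "\<exists>e>0. \<forall>m\<in>eps_subdiff x e. norm a ^ 2 - \<eta> \<le> norm m ^ 2"
proof (rule ccontr)
  assume "\<not> ?thesis"
  hence small: "\<And>e. e > 0 \<Longrightarrow> \<exists>m\<in>eps_subdiff x e. norm m ^ 2 < norm a ^ 2 - \<eta>"
    by (auto simp: not_le)
  have aS: "a \<in> subdiff J x" using a by (simp add: min_norm_elem_def)
  define C where "C n = eps_subdiff x (inverse (Suc n))" for n
  have "decseq C"
    unfolding decseq_def C_def by (auto intro!: eps_subdiff_mono le_imp_inverse_le)
  then obtain z where z: "\<And>n. z \<in> C n" and z_norm: "norm z ^ 2 \<le> norm a ^ 2 - \<eta>"
    using nested_closed_convex_common_point_norm_le[of C "norm a ^ 2 - \<eta>"] small
    by (auto simp: C_def convex_eps_subdiff closed_eps_subdiff)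
  have "z \<in> subdiff J x"
  proof (rule subdiff_if_eps_subdiff[OF subdiff_finite[OF aS]])
    fix e :: real assume "e > 0"
    then obtain n where "inverse (real (Suc n)) < e" using reals_Archimedean by blast
    hence "C n \<subseteq> eps_subdiff x e" unfolding C_def by (simp add: eps_subdiff_mono)
    thus "z \<in> eps_subdiff x e" using z[of n] by blast
  qed
  hence "norm a ^ 2 \<le> norm z ^ 2" using a by (simp add: min_norm_elem_def power_mono)
  thus False using z_norm \<eta> by linarith
qed

text \<open>The midpoint of \<open>b i\<close> and \<open>a\<close> lies in a small \<open>\<epsilon>\<close>-subdifferential, so its norm is almost
  \<open>\<parallel>a\<parallel>\<close>; the parallelogram law then forces \<open>b i\<close> close to \<open>a\<close>.\<close>

lemma tendsto_min_norm_if_eps_subdiff: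
  assumes a: "min_norm_elem (subdiff J x) a" and e: "(e \<longlongrightarrow> 0) F"
    and ev: "eventually (\<lambda>i. norm (b i) \<le> norm a \<and> b i \<in> eps_subdiff x (e i)) F"
  shows "(b \<longlongrightarrow> a) F"
proof (rule tendstoI)
  fix r :: real assume r: "r > 0"
  have aS: "a \<in> subdiff J x" using a by (simp add: min_norm_elem_def)
  obtain \<epsilon> where \<epsilon>: "\<epsilon> > 0"
    and lower: "\<And>m. m \<in> eps_subdiff x \<epsilon> \<Longrightarrow> norm a ^ 2 - r ^ 2 / 8 \<le> norm m ^ 2"
    using eps_subdiff_norm_lower_bound[OF a, of "r ^ 2 / 8"] r by auto
  have "eventually (\<lambda>i. e i < \<epsilon>) F" using e \<epsilon> by (intro order_tendstoD(2)) auto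
  with ev show "eventually (\<lambda>i. dist (b i) a < r) F"
  proof eventually_elim
    case (elim i)
    have "b i \<in> eps_subdiff x \<epsilon>" using elim eps_subdiff_mono[of "e i" \<epsilon> x] by auto
    moreover have "a \<in> eps_subdiff x \<epsilon>" using subdiff_subset_eps_subdiff[of \<epsilon> x] aS \<epsilon> by auto
    ultimately have "(1/2) *\<^sub>R (b i) + (1/2) *\<^sub>R a \<in> eps_subdiff x \<epsilon>"
      by (rule convexD[OF convex_eps_subdiff]) auto
    hence "norm a ^ 2 - r ^ 2 / 8 \<le> norm ((1/2) *\<^sub>R (b i + a)) ^ 2"
      by (intro lower) (simp add: scaleR_add_right)
    moreover have "norm (b i) ^ 2 \<le> norm a ^ 2" using elim by (simp add: power_mono)
    moreover define M where "M = norm ((1/2) *\<^sub>R (b i + a)) ^ 2"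
    moreover have "norm (b i - a) ^ 2 = 2 * norm (b i) ^ 2 + 2 * norm a ^ 2 - 4 * M"
      unfolding M_def by (rule norm_diff_sq_midpoint)
    moreover have "r ^ 2 / 8 * 4 < r ^ 2" using r by simp
    ultimately have "norm (b i - a) ^ 2 < r ^ 2" by linarith
    thus ?case using r by (simp add: dist_norm power_less_imp_less_base)
  qed
qed

end

section \<open>Trajectories of the flow\<close>

locale gradient_flow_trajectory = homogeneous_convex_functional J p
  for J :: "'a::{real_inner,complete_space} \<Rightarrow> ereal" and p +
  fixes u \<zeta> :: "real \<Rightarrow> 'a"
  assumes lsc_J: "lsc_fun J" and continuous_u: "continuous_on {0..} u"
    and min_norm_zeta: "\<And>t. t > 0 \<Longrightarrow> min_norm_elem (subdiff J (u t)) (\<zeta> t)"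
    and u_right_deriv: "\<And>t. t > 0 \<Longrightarrow> (u has_vector_derivative - \<zeta> t) (at t within {t..})"
begin

lemma zeta_subdiff: "t > 0 \<Longrightarrow> \<zeta> t \<in> subdiff J (u t)"
  using min_norm_zeta by (simp add: min_norm_elem_def)

lemma J_u_finite: "t > 0 \<Longrightarrow> J (u t) \<noteq> \<infinity>"
  using subdiff_finite[OF zeta_subdiff] .

lemma continuous_on_u_Icc: "0 \<le> a \<Longrightarrow> continuous_on {a..b} u"
  by (rule continuous_on_subset[OF continuous_u]) auto

lemma isCont_u:
  assumes "t > 0"
  shows "isCont u t"
proof -
  have "continuous_on {0<..} u" by (rule continuous_on_subset[OF continuous_u]) auto
  thus ?thesis using assms by (simp add: continuous_on_eq_continuous_at)
qed

lemma shifted_u_right_deriv: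
  assumes t: "t > 0" and \<sigma>: "\<sigma> \<ge> 0"
  shows "((\<lambda>\<tau>. u (\<tau> + \<sigma>)) has_vector_derivative - \<zeta> (t + \<sigma>)) (at t within {t..})"
proof -
  have "((\<lambda>\<tau>. \<tau> + \<sigma>) has_vector_derivative 1) (at t within {t..})"
    by (auto intro!: derivative_eq_intros)
  moreover have "(\<lambda>\<tau>. \<tau> + \<sigma>) ` {t..} = {t + \<sigma>..}"
    using image_add_atLeast[of \<sigma> t] by (simp add: add.commute[of _ \<sigma>])
  ultimately show ?thesis
    using vector_diff_chain_within[of "\<lambda>\<tau>. \<tau> + \<sigma>" 1 t "{t..}" u] u_right_deriv[of "t + \<sigma>"] t \<sigma>
    by (simp add: o_def)
qed

text \<open>\<open>\<parallel>u (\<tau> + \<sigma>) - u \<tau>\<parallel>\<^sup>2\<close> has non-positive right derivative by monotonicity of the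
  subdifferential.\<close>

lemma norm_shifted_difference_antimono:
  assumes s': "0 < s'" and ss: "s' \<le> s" and \<sigma>: "\<sigma> > 0"
  shows "norm (u (s + \<sigma>) - u s) \<le> norm (u (s' + \<sigma>) - u s')"
proof -
  define \<phi> where "\<phi> \<tau> = norm (u (\<tau> + \<sigma>) - u \<tau>) ^ 2" for \<tau>
  have "\<phi> s \<le> \<phi> s'"
  proof (rule le_if_continuous_right_deriv_nonpos_interior[where \<phi>=\<phi>, OF ss])
    have "continuous_on {s'..s} (\<lambda>\<tau>. u (\<tau> + \<sigma>))"
      by (rule continuous_on_compose2[OF continuous_u]) (use s' \<sigma> in \<open>auto intro!: continuous_intros\<close>)
    thus "continuous_on {s'..s} \<phi>"
      unfolding \<phi>_def using continuous_on_u_Icc s' by (intro continuous_intros) auto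
  next
    fix \<tau> assume \<tau>: "\<tau> \<in> {s'<..<s}"
    hence \<tau>0: "\<tau> > 0" using s' by simp
    have "((\<lambda>\<tau>. u (\<tau> + \<sigma>) - u \<tau>) has_vector_derivative (- \<zeta> (\<tau> + \<sigma>) - - \<zeta> \<tau>)) (at \<tau> within {\<tau>..})"
      by (intro has_vector_derivative_diff shifted_u_right_deriv u_right_deriv \<tau>0) (use \<sigma> in auto)
    from has_real_derivative_norm_sq[OF this]
    have "(\<phi> has_real_derivative - 2 * inner (\<zeta> (\<tau> + \<sigma>) - \<zeta> \<tau>) (u (\<tau> + \<sigma>) - u \<tau>))
             (at \<tau> within {\<tau>..})"
      unfolding \<phi>_def by (simp add: inner_commute inner_diff_left)
    moreover have "0 \<le> inner (\<zeta> (\<tau> + \<sigma>) - \<zeta> \<tau>) (u (\<tau> + \<sigma>) - u \<tau>)"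
      by (rule subdiff_monotone[OF zeta_subdiff zeta_subdiff]) (use \<tau>0 \<sigma> in auto)
    ultimately show "\<exists>D. (\<phi> has_real_derivative D) (at \<tau> within {\<tau>..}) \<and> D \<le> 0"
      by (intro exI conjI) auto
  qed
  from power2_le_imp_le[OF this[unfolded \<phi>_def] norm_ge_zero] show ?thesis .
qed

lemma norm_zeta_antimono:
  assumes s': "0 < s'" and ss: "s' \<le> s"
  shows "norm (\<zeta> s) \<le> norm (\<zeta> s')"
proof -
  have lim_s: "((\<lambda>h. norm ((1/h) *\<^sub>R (u (s + h) - u s))) \<longlongrightarrow> norm (- \<zeta> s)) (at_right 0)"
    by (intro tendsto_norm right_difference_quotient_tendsto u_right_deriv) (use s' ss in auto)
  have lim_s': "((\<lambda>h. norm ((1/h) *\<^sub>R (u (s' + h) - u s'))) \<longlongrightarrow> norm (- \<zeta> s')) (at_right 0)"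
    by (intro tendsto_norm right_difference_quotient_tendsto u_right_deriv s')
  have ev: "eventually (\<lambda>h. norm ((1/h) *\<^sub>R (u (s + h) - u s))
                                \<le> norm ((1/h) *\<^sub>R (u (s' + h) - u s'))) (at_right 0)"
    using eventually_at_right_less[of "0::real"]
    by eventually_elim
      (use norm_shifted_difference_antimono[OF s' ss] in \<open>simp add: divide_right_mono add.commute\<close>)
  show ?thesis using tendsto_le[OF _ lim_s' lim_s ev] by simp
qed

text \<open>For \<open>s > t\<close>, \<open>\<zeta> s\<close> is a \<open>2 \<parallel>\<zeta> t\<parallel> \<parallel>u s - u t\<parallel>\<close>-subgradient at \<open>u t\<close>
  that is no longer than \<open>\<zeta> t\<close>.\<close>

lemma zeta_right_continuous:
  assumes t: "t > 0"
  shows "(\<zeta> \<longlongrightarrow> \<zeta> t) (at_right t)"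
proof (rule tendsto_min_norm_if_eps_subdiff[OF min_norm_zeta[OF t],
      where e = "\<lambda>s. 2 * norm (\<zeta> t) * norm (u s - u t)"])
  have "(u \<longlongrightarrow> u t) (at_right t)"
    using isCont_u[OF t] unfolding isCont_def by (rule tendsto_within_subset) simp
  hence "((\<lambda>s. 2 * norm (\<zeta> t) * norm (u s - u t)) \<longlongrightarrow> 2 * norm (\<zeta> t) * norm (u t - u t)) (at_right t)"
    by (intro tendsto_intros)
  thus "((\<lambda>s. 2 * norm (\<zeta> t) * norm (u s - u t)) \<longlongrightarrow> 0) (at_right t)" by simp
  show "eventually (\<lambda>s. norm (\<zeta> s) \<le> norm (\<zeta> t)
          \<and> \<zeta> s \<in> eps_subdiff (u t) (2 * norm (\<zeta> t) * norm (u s - u t))) (at_right t)"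
    using eventually_at_right_less[of t]
  proof eventually_elim
    case (elim s)
    have s0: "s > 0" using elim t by simp
    have shorter: "norm (\<zeta> s) \<le> norm (\<zeta> t)" using norm_zeta_antimono[OF t] elim by simp
    have "inner (\<zeta> s - \<zeta> t) (u s - u t) \<le> norm (\<zeta> s - \<zeta> t) * norm (u s - u t)"
      by (rule norm_cauchy_schwarz)
    also have "\<dots> \<le> (2 * norm (\<zeta> t)) * norm (u s - u t)"
      using norm_triangle_ineq4[of "\<zeta> s" "\<zeta> t"] shorter by (intro mult_right_mono) auto
    finally have cs: "inner (\<zeta> s - \<zeta> t) (u s - u t) \<le> 2 * norm (\<zeta> t) * norm (u s - u t)" .
    have "\<zeta> s \<in> eps_subdiff (u t) (2 * norm (\<zeta> t) * norm (u s - u t))"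
      unfolding eps_subdiff_def
    proof safe
      fix v assume v: "J v \<noteq> \<infinity>"
      show "Jr (u t) + inner (\<zeta> s) (v - u t) \<le> Jr v + 2 * norm (\<zeta> t) * norm (u s - u t)"
        using subgradient_ineq[OF zeta_subdiff[OF s0] v]
          subgradient_ineq[OF zeta_subdiff[OF t] J_u_finite[OF s0]] cs
        by (simp add: inner_diff_left inner_diff_right)
    qed
    with shorter show ?case by simp
  qed
qed

lemma norm_u_sq_right_deriv:
  assumes t: "t > 0"
  shows "((\<lambda>s. norm (u s) ^ 2) has_real_derivative (- 2 * p * Jr (u t))) (at t within {t..})"
  using has_real_derivative_norm_sq[OF u_right_deriv[OF t]] inner_subdiff_self[OF zeta_subdiff[OF t]]
  by (simp add: inner_commute mult.assoc)

lemma norm_u_antimono: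
  assumes "0 \<le> s" and "s \<le> t"
  shows "norm (u t) \<le> norm (u s)"
proof -
  have "norm (u t) ^ 2 \<le> norm (u s) ^ 2"
  proof (rule le_if_continuous_right_deriv_nonpos_interior[where \<phi>="\<lambda>s. norm (u s) ^ 2"])
    show "continuous_on {s..t} (\<lambda>s. norm (u s) ^ 2)"
      using continuous_on_u_Icc[OF assms(1)] by (intro continuous_intros)
    fix \<tau> assume "\<tau> \<in> {s<..<t}"
    hence "\<tau> > 0" using assms by simp
    moreover have "- 2 * p * Jr (u \<tau>) \<le> 0" using p_ge_1 Jr_nonneg[of "u \<tau>"] by simp
    ultimately show "\<exists>D. ((\<lambda>s. norm (u s) ^ 2) has_real_derivative D) (at \<tau> within {\<tau>..}) \<and> D \<le> 0"
      using norm_u_sq_right_deriv by blast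
  qed fact
  from power2_le_imp_le[OF this norm_ge_zero] show ?thesis .
qed

lemma inner_u_nullspace_const:
  assumes n: "n \<in> nullspace J" and t: "0 \<le> t"
  shows "inner (u t) n = inner (u 0) n"
proof -
  have "((\<lambda>s. c * inner (u s) n) has_real_derivative 0) (at \<tau> within {\<tau>..})" if "\<tau> > 0" for \<tau> c
    using DERIV_cmult[OF has_real_derivative_inner_const[OF u_right_deriv[OF that], where n = n], of c]
      subdiff_orthogonal_nullspace[OF zeta_subdiff[OF that] n]
    by simp
  moreover have "continuous_on {0..t} (\<lambda>s. c * inner (u s) n)" for c
    using continuous_on_u_Icc[of 0 t] by (intro continuous_intros) auto
  ultimately have "c * inner (u t) n \<le> c * inner (u 0) n" for c
    using le_if_continuous_right_deriv_nonpos_interior[OF t, of "\<lambda>s. c * inner (u s) n"] by auto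
  from this[of 1] this[of "-1"] show ?thesis by simp
qed

end

section \<open>The Rayleigh quotient along the flow\<close>

context gradient_flow_trajectory
begin

definition nsq :: "real \<Rightarrow> real" where "nsq s = norm (u s) ^ 2"

text \<open>Written as a power of \<open>nsq\<close> to get its right derivative by the chain rule;
  it is \<open>1 / \<parallel>u s\<parallel>\<close> where \<open>u s \<noteq> 0\<close> and \<open>0\<close> elsewhere.\<close>

definition inv_norm :: "real \<Rightarrow> real" where "inv_norm s = nsq s powr (-1/2)"

definition direction :: "real \<Rightarrow> 'a" where "direction s = inv_norm s *\<^sub>R u s"

definition rayleigh :: "real \<Rightarrow> real" where "rayleigh s = Jr (direction s)"

definition direction' :: "real \<Rightarrow> 'a" where
  "direction' t = inv_norm t *\<^sub>R (- \<zeta> t) + (p * Jr (u t) * inv_norm t ^ 3) *\<^sub>R u t"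

lemma nsq_pos: "u s \<noteq> 0 \<Longrightarrow> nsq s > 0"
  by (simp add: nsq_def)

lemma nsq_powr:
  assumes "u s \<noteq> 0"
  shows "nsq s powr a = norm (u s) powr (2 * a)"
proof -
  have "nsq s = norm (u s) powr 2" using assms by (simp add: nsq_def powr_numeral)
  thus ?thesis by (simp only: powr_powr)
qed

lemma inv_norm_pos: "u s \<noteq> 0 \<Longrightarrow> inv_norm s > 0"
  using nsq_pos[of s] by (simp add: inv_norm_def)

lemma inv_norm_eq:
  assumes "u s \<noteq> 0"
  shows "inv_norm s = 1 / norm (u s)"
proof -
  have "inv_norm s = norm (u s) powr (2 * (-1/2))" unfolding inv_norm_def by (rule nsq_powr[OF assms])
  also have "\<dots> = inverse (norm (u s) powr 1)" using powr_minus[of "norm (u s)" 1] by simp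
  finally show ?thesis using assms by (simp add: divide_inverse)
qed

lemma rayleigh_eq: "u s \<noteq> 0 \<Longrightarrow> rayleigh s = Jr (u s) / norm (u s) powr p"
  using Jr_scaleR[of "inv_norm s" "u s"] inv_norm_pos[of s] inv_norm_eq[of s]
  by (simp add: rayleigh_def direction_def powr_divide)

lemma inv_norm_right_deriv:
  assumes t: "t > 0" and ut: "u t \<noteq> 0"
  shows "(inv_norm has_real_derivative (p * Jr (u t) * inv_norm t ^ 3)) (at t within {t..})"
proof -
  have "((\<lambda>z. z powr (-1/2)) has_real_derivative (-1/2) * nsq t powr (-1/2 - 1)) (at (nsq t))"
    by (rule has_real_derivative_powr) (rule nsq_pos[OF ut])
  from DERIV_chain2[OF this norm_u_sq_right_deriv[OF t, folded nsq_def]]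
  have "(inv_norm has_real_derivative (-1/2) * nsq t powr (-1/2 - 1) * (- 2 * p * Jr (u t)))
          (at t within {t..})"
    unfolding inv_norm_def[abs_def] .
  moreover have "nsq t powr (-1/2 - 1) = inv_norm t ^ 3"
    unfolding inv_norm_def power3_eq_cube powr_add[symmetric]
    by (rule arg_cong[where f="\<lambda>e. nsq t powr e"]) simp
  ultimately show ?thesis by (simp add: algebra_simps)
qed

lemma direction_right_deriv:
  assumes "t > 0" and "u t \<noteq> 0"
  shows "(direction has_vector_derivative direction' t) (at t within {t..})"
  unfolding direction_def[abs_def] direction'_def
  by (rule has_vector_derivative_scaleR[OF inv_norm_right_deriv[OF assms] u_right_deriv[OF assms(1)]])

text \<open>By Euler's identity \<open>\<langle>\<zeta>, u\<rangle> = p J(u)\<close>, this is the Cauchy-Schwarz inequality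
  \<open>\<langle>\<zeta>, u\<rangle>\<^sup>2 \<le> \<parallel>\<zeta>\<parallel>\<^sup>2 \<parallel>u\<parallel>\<^sup>2\<close>.\<close>

lemma inner_zeta_direction'_nonpos:
  assumes t: "t > 0" and ut: "u t \<noteq> 0"
  shows "inner (\<zeta> t) (direction' t) \<le> 0"
proof -
  define r g j where "r = norm (u t)" and "g = norm (\<zeta> t)" and "j = p * Jr (u t)"
  have r: "r > 0" and inv: "inv_norm t = 1 / r" using ut inv_norm_eq[OF ut] by (simp_all add: r_def)
  have euler: "inner (\<zeta> t) (u t) = j" using inner_subdiff_self[OF zeta_subdiff[OF t]] by (simp add: j_def)
  have "j \<ge> 0" using p_ge_1 Jr_nonneg[of "u t"] by (simp add: j_def)
  moreover have "j \<le> g * r" using norm_cauchy_schwarz[of "\<zeta> t" "u t"] euler by (simp add: g_def r_def)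
  ultimately have "j ^ 2 \<le> (g * r) ^ 2" by (rule power_mono[rotated])
  hence "j ^ 2 / r ^ 3 \<le> g ^ 2 / r" using r by (simp add: field_simps power2_eq_square power3_eq_cube)
  moreover have "inner (\<zeta> t) (direction' t)
      = - (1 / r) * inner (\<zeta> t) (\<zeta> t) + j * (1 / r) ^ 3 * inner (\<zeta> t) (u t)"
    unfolding direction'_def inv j_def[symmetric] by (simp add: inner_add_right inner_diff_right)
  moreover have "\<dots> = j ^ 2 / r ^ 3 - g ^ 2 / r"
    using r by (simp add: euler power2_norm_eq_inner[symmetric] g_def power2_eq_square power3_eq_cube
        field_simps)
  ultimately show ?thesis by linarith
qed

lemma J_direction_finite: "t > 0 \<Longrightarrow> J (direction t) \<noteq> \<infinity>"
  unfolding direction_def by (rule J_scaleR_finite[OF J_u_finite])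

text \<open>A subgradient of \<open>J\<close> at \<open>direction s\<close> is the rescaled \<open>\<zeta> s\<close>, which tends to the rescaled
  \<open>\<zeta> t\<close> as \<open>s \<rightarrow> t\<^sup>+\<close>; so the upper right Dini derivative of \<open>rayleigh\<close> is at most
  \<open>\<langle>\<zeta> t, direction' t\<rangle>\<close> up to a positive factor.\<close>

lemma rayleigh_right_Dini_nonpos:
  assumes t: "t > 0" and ut: "u t \<noteq> 0" and e: "e > 0"
  shows "eventually (\<lambda>s. rayleigh s \<le> rayleigh t + e * (s - t)) (at_right t)"
proof -
  define \<eta> where "\<eta> s = (inv_norm s powr (p - 1)) *\<^sub>R \<zeta> s" for s
  define q where "q s = (1 / (s - t)) *\<^sub>R (direction s - direction t)" for s
  have "(u \<longlongrightarrow> u t) (at_right t)"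
    using isCont_u[OF t] unfolding isCont_def by (rule tendsto_within_subset) simp
  hence ev_nonzero: "eventually (\<lambda>s. u s \<noteq> 0) (at_right t)"
    using tendsto_imp_eventually_ne ut by blast
  have "(q \<longlongrightarrow> direction' t) (at_right t)"
    using right_difference_quotient_tendsto[OF direction_right_deriv[OF t ut]]
    unfolding filterlim_at_right_to_0[of _ _ t] q_def by (simp add: add.commute)
  moreover have "(inv_norm \<longlongrightarrow> inv_norm t) (at_right t)"
    using DERIV_continuous[OF inv_norm_right_deriv[OF t ut]]
    unfolding continuous_within at_within_Ici_at_right .
  hence "(\<eta> \<longlongrightarrow> \<eta> t) (at_right t)"
    unfolding \<eta>_def[abs_def]
    by (intro tendsto_intros zeta_right_continuous t) (use inv_norm_pos[OF ut] in auto)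
  ultimately have "((\<lambda>s. inner (\<eta> s) (q s)) \<longlongrightarrow> inner (\<eta> t) (direction' t)) (at_right t)"
    by (intro tendsto_intros)
  moreover have "inner (\<eta> t) (direction' t) < e"
    using mult_nonneg_nonpos[OF powr_ge_zero[of "inv_norm t" "p - 1"] inner_zeta_direction'_nonpos[OF t ut]] e
    by (simp add: \<eta>_def)
  ultimately have "eventually (\<lambda>s. inner (\<eta> s) (q s) < e) (at_right t)"
    by (rule order_tendstoD(2))
  with ev_nonzero eventually_at_right_less[of t] show ?thesis
  proof eventually_elim
    case (elim s)
    have "\<eta> s \<in> subdiff J (direction s)"
      unfolding \<eta>_def direction_def
      using subdiff_scaleR[OF zeta_subdiff inv_norm_pos] elim t by simp
    from subgradient_ineq[OF this J_direction_finite[OF t]]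
    have "rayleigh s - rayleigh t \<le> (s - t) * inner (\<eta> s) (q s)"
      using elim by (simp add: rayleigh_def q_def inner_diff_right)
    also have "\<dots> \<le> (s - t) * e" using elim by (intro mult_left_mono) auto
    finally show ?case by (simp add: algebra_simps)
  qed
qed

lemma rayleigh_left_lsc:
  assumes t: "t > 0" and ut: "u t \<noteq> 0" and e: "e > 0"
  shows "eventually (\<lambda>s. rayleigh t < rayleigh s + e) (at_left t)"
proof -
  have ulim: "(u \<longlongrightarrow> u t) (at_left t)"
    using isCont_u[OF t] unfolding isCont_def by (rule tendsto_within_subset) simp
  hence "(direction \<longlongrightarrow> direction t) (at_left t)"
    unfolding direction_def[abs_def] inv_norm_def[abs_def] nsq_def[abs_def]
    by (intro tendsto_intros) (use ut in auto)
  moreover have "open {x. \<not> J x \<le> ereal (rayleigh t - e)}"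
    using lsc_J unfolding lsc_fun_def by (simp add: open_Collect_neg)
  moreover have "\<not> J (direction t) \<le> ereal (rayleigh t - e)"
    using J_eq_Jr[OF J_direction_finite[OF t]] e by (simp add: rayleigh_def)
  ultimately have "eventually (\<lambda>s. direction s \<in> {x. \<not> J x \<le> ereal (rayleigh t - e)}) (at_left t)"
    by (intro topological_tendstoD) auto
  moreover have "eventually (\<lambda>s. s > 0) (at_left t)"
    using t unfolding eventually_at_left_field by (intro exI[of _ 0]) auto
  ultimately show ?thesis
  proof eventually_elim
    case (elim s)
    thus ?case using J_eq_Jr[OF J_direction_finite[of s]] by (auto simp: rayleigh_def not_le)
  qed
qed

lemma rayleigh_antimono:
  assumes s: "0 < s" and st: "s \<le> t" and nonzero: "\<And>\<tau>. \<tau> \<in> {s..t} \<Longrightarrow> u \<tau> \<noteq> 0"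
  shows "rayleigh t \<le> rayleigh s"
proof (rule le_if_left_lsc_right_Dini_nonpos[OF st])
  fix \<tau> e :: real assume "\<tau> \<in> {s<..t}" and "e > 0"
  thus "eventually (\<lambda>\<sigma>. rayleigh \<tau> < rayleigh \<sigma> + e) (at_left \<tau>)"
    using rayleigh_left_lsc nonzero s by auto
next
  fix \<tau> e :: real assume "\<tau> \<in> {s..<t}" and "e > 0"
  thus "eventually (\<lambda>\<sigma>. rayleigh \<sigma> \<le> rayleigh \<tau> + e * (\<sigma> - \<tau>)) (at_right \<tau>)"
    using rayleigh_right_Dini_nonpos nonzero s by auto
qed

end

section \<open>Extinction in finite time and decay of the rescaled profile\<close>

locale finite_extinction_flow = gradient_flow_trajectory J p u \<zeta>
  for J :: "'a::{real_inner,complete_space} \<Rightarrow> ereal" and p u \<zeta> +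
  fixes f :: 'a
  assumes p_less_2: "p < 2" and u_0: "u 0 = f" and f_H0: "f \<in> H0 J"
    and lambda1_pos: "lambda1 p J > 0"
begin

definition norm_pow :: "real \<Rightarrow> real" where "norm_pow s = nsq s powr ((2 - p) / 2)"

lemma norm_pow_eq: "norm_pow s = norm (u s) powr (2 - p)"
proof (cases "u s = 0")
  case True thus ?thesis by (simp add: norm_pow_def nsq_def)
next
  case False
  have "2 * ((2 - p) / 2) = 2 - p" by simp
  thus ?thesis unfolding norm_pow_def nsq_powr[OF False] by (simp only:)
qed

lemma norm_pow_nonneg: "0 \<le> norm_pow s"
  by (simp add: norm_pow_def)

lemma norm_pow_right_deriv:
  assumes t: "t > 0" and ut: "u t \<noteq> 0"
  shows "(norm_pow has_real_derivative (- (2 - p) * p * rayleigh t)) (at t within {t..})"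
proof -
  have "((\<lambda>z. z powr ((2 - p) / 2)) has_real_derivative (2 - p) / 2 * nsq t powr ((2 - p) / 2 - 1))
          (at (nsq t))"
    by (rule has_real_derivative_powr) (rule nsq_pos[OF ut])
  from DERIV_chain2[OF this norm_u_sq_right_deriv[OF t, folded nsq_def]]
  have "(norm_pow has_real_derivative (2 - p) / 2 * nsq t powr ((2 - p) / 2 - 1) * (- 2 * p * Jr (u t)))
          (at t within {t..})"
    unfolding norm_pow_def[abs_def] .
  moreover have "(2 - p) / 2 * nsq t powr ((2 - p) / 2 - 1) * (- 2 * p * Jr (u t)) = - (2 - p) * p * rayleigh t"
  proof -
    have e: "2 * ((2 - p) / 2 - 1) = - p" by (simp add: field_simps)
    have "nsq t powr ((2 - p) / 2 - 1) = 1 / norm (u t) powr p"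
      unfolding nsq_powr[OF ut] by (simp only: e powr_minus_divide)
    thus ?thesis using ut by (simp add: rayleigh_eq field_simps)
  qed
  ultimately show ?thesis by simp
qed

lemma continuous_on_norm_pow: "0 \<le> a \<Longrightarrow> continuous_on {a..b} norm_pow"
  unfolding norm_pow_def[abs_def] nsq_def
  by (rule continuous_on_powr')
    (use p_less_2 continuous_on_u_Icc in \<open>auto intro!: continuous_intros\<close>)

lemma f_nonzero: "f \<noteq> 0"
  using f_H0 by (simp add: H0_def)

lemma u_in_H0:
  assumes "0 \<le> t" and "u t \<noteq> 0"
  shows "u t \<in> H0 J"
  using inner_u_nullspace_const[OF _ assms(1)] f_H0 u_0 assms(2) by (simp add: H0_def)

lemma rayleigh_lower_bound:
  obtains l where "l > 0" and "\<And>t. t > 0 \<Longrightarrow> u t \<noteq> 0 \<Longrightarrow> l \<le> p * rayleigh t"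
proof -
  obtain l where l: "l > 0" "ereal l \<le> lambda1 p J"
  proof (cases "lambda1 p J")
    case (real r) thus ?thesis using that[of r] lambda1_pos by auto
  next
    case PInf thus ?thesis using that[of 1] by auto
  qed (use lambda1_pos in auto)
  have "l \<le> p * rayleigh t" if t: "t > 0" and ut: "u t \<noteq> 0" for t
  proof -
    have "ereal l \<le> ereal p * J (u t) / ereal (norm (u t) powr p)"
      using l(2) INF_lower[OF u_in_H0[OF _ ut]] t unfolding lambda1_def by (meson less_imp_le order_trans)
    also have "\<dots> = ereal (p * rayleigh t)"
      using J_eq_Jr[OF J_u_finite[OF t]] ut by (simp add: rayleigh_eq)
    finally show ?thesis by simp
  qed
  with l(1) show ?thesis by (rule that)
qed

text \<open>Coercivity makes \<open>norm_pow\<close> decrease at a rate bounded away from zero while \<open>u \<noteq> 0\<close>.\<close>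

lemma u_vanishes: "\<exists>t>0. u t = 0"
proof (rule ccontr)
  assume "\<not> ?thesis"
  hence nonzero: "\<And>t. t > 0 \<Longrightarrow> u t \<noteq> 0" by auto
  obtain l where l: "l > 0" and bound: "\<And>t. t > 0 \<Longrightarrow> u t \<noteq> 0 \<Longrightarrow> l \<le> p * rayleigh t"
    using rayleigh_lower_bound by blast
  define c where "c = (2 - p) * l"
  have c: "c > 0" using l p_less_2 by (simp add: c_def)
  define \<sigma> where "\<sigma> = 1 + (norm_pow 1 + 1) / c"
  have \<sigma>: "1 \<le> \<sigma>" using c norm_pow_nonneg[of 1] by (simp add: \<sigma>_def)
  have "norm_pow \<sigma> + c * \<sigma> \<le> norm_pow 1 + c * 1"
  proof (rule le_if_continuous_right_deriv_nonpos_interior[where \<phi>="\<lambda>s. norm_pow s + c * s", OF \<sigma>])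
    show "continuous_on {1..\<sigma>} (\<lambda>s. norm_pow s + c * s)"
      using continuous_on_norm_pow[of 1 \<sigma>] by (intro continuous_intros) auto
    fix t assume "t \<in> {1<..<\<sigma>}"
    hence t: "t > 0" by simp
    have "((\<lambda>s. norm_pow s + c * s) has_real_derivative (- (2 - p) * p * rayleigh t + c))
            (at t within {t..})"
      using DERIV_add[OF norm_pow_right_deriv[OF t nonzero[OF t]] DERIV_cmult[OF DERIV_ident, of c]]
      by simp
    moreover have "(2 - p) * l \<le> (2 - p) * (p * rayleigh t)"
      using bound[OF t nonzero[OF t]] p_less_2 by (intro mult_left_mono) auto
    ultimately show "\<exists>D. ((\<lambda>s. norm_pow s + c * s) has_real_derivative D) (at t within {t..}) \<and> D \<le> 0"
      by (intro exI conjI) (auto simp: c_def algebra_simps)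
  qed
  also have "c * \<sigma> = c + (norm_pow 1 + 1)" using c by (simp add: \<sigma>_def field_simps)
  finally show False using norm_pow_nonneg[of \<sigma>] by simp
qed

lemma vanishing_times_nonempty: "{T. T > 0 \<and> (\<forall>t\<ge>T. u t = 0)} \<noteq> {}"
proof -
  obtain t0 where t0: "t0 > 0" "u t0 = 0" using u_vanishes by blast
  hence "\<forall>t\<ge>t0. u t = 0" using norm_u_antimono[of t0] by fastforce
  with t0 show ?thesis by auto
qed

lemma extinction_time_nonneg: "0 \<le> extinction_time u"
  unfolding extinction_time_def by (rule cInf_greatest[OF vanishing_times_nonempty]) auto

lemma u_after_extinction_time: "t > extinction_time u \<Longrightarrow> u t = 0"
  unfolding extinction_time_def using cInf_lessD[OF vanishing_times_nonempty] by force

lemma u_extinction_time: "u (extinction_time u) = 0"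
proof -
  let ?T = "extinction_time u"
  have "(u \<longlongrightarrow> u ?T) (at ?T within {0..})"
    using continuous_u extinction_time_nonneg by (simp add: continuous_on_def)
  hence "(u \<longlongrightarrow> u ?T) (at_right ?T)"
    by (rule tendsto_within_subset) (use extinction_time_nonneg in auto)
  moreover have "eventually (\<lambda>s. u s = 0) (at_right ?T)"
    using eventually_at_right_less[of ?T] by eventually_elim (rule u_after_extinction_time)
  hence "(u \<longlongrightarrow> 0) (at_right ?T)" by (rule tendsto_eventually)
  ultimately show ?thesis by (rule tendsto_unique[rotated]) simp
qed

lemma extinction_time_pos: "0 < extinction_time u"
proof (rule ccontr)
  assume "\<not> 0 < extinction_time u"
  with extinction_time_nonneg have "extinction_time u = 0" by simp
  with u_extinction_time u_0 f_nonzero show False by simp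
qed

lemma u_before_extinction_time:
  assumes t: "0 \<le> t" "t < extinction_time u"
  shows "u t \<noteq> 0"
proof
  assume ut: "u t = 0"
  with u_0 f_nonzero t have "t > 0" by (cases "t = 0") auto
  with ut have "t \<in> {T. T > 0 \<and> (\<forall>t'\<ge>T. u t' = 0)}" using norm_u_antimono[of t] by fastforce
  hence "extinction_time u \<le> t"
    unfolding extinction_time_def by (rule cInf_lower) (auto intro: bdd_belowI[of _ 0])
  with t show False by simp
qed

text \<open>Integrating \<open>norm_pow' = -(2 - p) p rayleigh\<close> from \<open>\<tau>\<close> to the extinction time,
  using that \<open>rayleigh\<close> is non-increasing and \<open>norm_pow\<close> vanishes there.\<close>

lemma norm_pow_le_rayleigh_remaining_time:
  assumes \<tau>: "0 < \<tau>" "\<tau> < extinction_time u"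
  shows "norm_pow \<tau> \<le> (2 - p) * p * rayleigh \<tau> * (extinction_time u - \<tau>)"
proof -
  define T c where "T = extinction_time u" and "c = (2 - p) * p * rayleigh \<tau>"
  have "- norm_pow T - c * T \<le> - norm_pow \<tau> - c * \<tau>"
  proof (rule le_if_continuous_right_deriv_nonpos_interior[where \<phi>="\<lambda>s. - norm_pow s - c * s"])
    show "\<tau> \<le> T" using \<tau> by (simp add: T_def)
    show "continuous_on {\<tau>..T} (\<lambda>s. - norm_pow s - c * s)"
      using continuous_on_norm_pow[of \<tau> T] \<tau> by (intro continuous_intros) auto
    fix t assume t: "t \<in> {\<tau><..<T}"
    hence t0: "t > 0" and nonzero: "\<And>s. s \<in> {\<tau>..t} \<Longrightarrow> u s \<noteq> 0"
      using \<tau> u_before_extinction_time by (auto simp: T_def)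
    have "((\<lambda>s. - norm_pow s - c * s) has_real_derivative (2 - p) * p * rayleigh t - c)
            (at t within {t..})"
      using DERIV_diff[OF DERIV_minus[OF norm_pow_right_deriv[OF t0 nonzero]] DERIV_cmult[OF DERIV_ident, of c]]
        t by (simp add: algebra_simps)
    moreover have "(2 - p) * p * rayleigh t \<le> c"
      unfolding c_def using rayleigh_antimono[OF \<tau>(1) _ nonzero] t p_ge_1 p_less_2
      by (intro mult_left_mono) auto
    ultimately show "\<exists>D. ((\<lambda>s. - norm_pow s - c * s) has_real_derivative D) (at t within {t..}) \<and> D \<le> 0"
      by (intro exI conjI) auto
  qed
  moreover have "norm_pow T = 0" using u_extinction_time by (simp add: T_def norm_pow_def nsq_def)
  ultimately show ?thesis by (simp add: T_def c_def algebra_simps)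
qed

definition decay_ratio :: "real \<Rightarrow> real" where
  "decay_ratio s = norm_pow s / (extinction_time u - s)"

lemma decay_ratio_antimono:
  assumes s: "0 \<le> s" and st: "s \<le> t" and t: "t < extinction_time u"
  shows "decay_ratio t \<le> decay_ratio s"
proof (rule le_if_continuous_right_deriv_nonpos_interior[where \<phi>=decay_ratio, OF st])
  define T where "T = extinction_time u"
  show "continuous_on {s..t} decay_ratio"
    unfolding decay_ratio_def[abs_def] using continuous_on_norm_pow[of s t] s t
    by (intro continuous_intros) auto
  fix \<sigma> assume \<sigma>: "\<sigma> \<in> {s<..<t}"
  hence \<sigma>0: "\<sigma> > 0" and u\<sigma>: "u \<sigma> \<noteq> 0" and \<sigma>T: "\<sigma> < T"
    using s t u_before_extinction_time[of \<sigma>] by (auto simp: T_def)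
  have deriv: "(decay_ratio has_real_derivative
          ((- (2 - p) * p * rayleigh \<sigma>) * (T - \<sigma>) - norm_pow \<sigma> * (0 - 1)) / ((T - \<sigma>) * (T - \<sigma>)))
          (at \<sigma> within {\<sigma>..})"
    unfolding decay_ratio_def[abs_def] T_def[symmetric] using \<sigma>T
    by (intro DERIV_divide norm_pow_right_deriv \<sigma>0 u\<sigma> DERIV_diff DERIV_const DERIV_ident) simp
  have "(- (2 - p) * p * rayleigh \<sigma>) * (T - \<sigma>) - norm_pow \<sigma> * (0 - 1) \<le> 0"
    using norm_pow_le_rayleigh_remaining_time[OF \<sigma>0] \<sigma>T by (simp add: T_def algebra_simps)
  hence "((- (2 - p) * p * rayleigh \<sigma>) * (T - \<sigma>) - norm_pow \<sigma> * (0 - 1)) / ((T - \<sigma>) * (T - \<sigma>)) \<le> 0"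
    by (rule divide_nonpos_pos) (use \<sigma>T in simp)
  with deriv show "\<exists>D. (decay_ratio has_real_derivative D) (at \<sigma> within {\<sigma>..}) \<and> D \<le> 0"
    by blast
qed

lemma norm_rescaled_eq:
  assumes t: "0 \<le> t" "t < extinction_time u"
  shows "norm ((1 / (1 - t / extinction_time u) powr (1 / (2 - p))) *\<^sub>R u t)
           = (extinction_time u * decay_ratio t) powr (1 / (2 - p))"
proof -
  define T where "T = extinction_time u"
  have T: "T > 0" and tT: "t < T" using extinction_time_pos t by (simp_all add: T_def)
  have "T * decay_ratio t = norm (u t) powr (2 - p) / (1 - t / T)"
    using T tT by (simp add: decay_ratio_def norm_pow_eq T_def field_simps)
  hence "(T * decay_ratio t) powr (1 / (2 - p)) = norm (u t) / (1 - t / T) powr (1 / (2 - p))"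
    using p_less_2 T tT by (simp add: powr_divide powr_powr)
  thus ?thesis using T tT by (simp add: T_def)
qed

lemma norm_rescaled_antimono:
  assumes "0 \<le> s" and "s \<le> t" and "t < extinction_time u"
  shows "norm ((1 / (1 - t / extinction_time u) powr (1 / (2 - p))) *\<^sub>R u t)
           \<le> norm ((1 / (1 - s / extinction_time u) powr (1 / (2 - p))) *\<^sub>R u s)"
  unfolding norm_rescaled_eq[OF order_trans[OF assms(1,2)] assms(3)]
    norm_rescaled_eq[OF assms(1) le_less_trans[OF assms(2,3)]]
  using decay_ratio_antimono[OF assms] extinction_time_pos p_less_2
    norm_pow_nonneg[of t] assms(3)
  by (intro powr_mono2 mult_left_mono) (auto simp: decay_ratio_def)

end

theorem lemma3:
  fixes J :: "'a::{real_inner, complete_space} \<Rightarrow> ereal"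
    and p :: real and f :: 'a and u :: "real \<Rightarrow> 'a"
  assumes "convex_fun J" and "lsc_fun J" and "proper_fun J" and "dense_domain J"
    and "abs_homogeneous p J"
    and "lambda1 p J > 0"
    and "1 \<le> p" and "p < 2"
    and "f \<in> H0 J"
    and "gradient_flow J f u"
  shows "let Tex = extinction_time u;
             lam = 1 / ((2 - p) * Tex);
             a = (\<lambda>t. (1 - (2 - p) * lam * t) powr (1 / (2 - p)));
             w = (\<lambda>t. (1 / a t) *\<^sub>R u t)
         in \<forall>s t. 0 \<le> s \<and> s \<le> t \<and> t < Tex \<longrightarrow> norm (w t) \<le> norm (w s)"
proof -
  obtain \<zeta> where \<zeta>: "\<And>t. t > 0 \<Longrightarrow> min_norm_elem (subdiff J (u t)) (\<zeta> t)
                          \<and> (u has_vector_derivative - \<zeta> t) (at t within {t..})"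
    using assms(10) unfolding gradient_flow_def by metis
  interpret finite_extinction_flow J p u \<zeta> f
    using assms \<zeta> by unfold_locales (auto simp: gradient_flow_def)
  have "(2 - p) * (1 / ((2 - p) * extinction_time u)) * t = t / extinction_time u" for t
    using p_less_2 by simp
  thus ?thesis unfolding Let_def using norm_rescaled_antimono by simp
qed

end
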